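(* For every 2-qubit pure state $\rho$, its posterior $\chi^2$ divergence information content satisfies $I_{\chi^2,post}(\rho)\le 2$, and the value $2$ is attained by some 2-qubit pure state. In other words, the upper bound on the posterior information content of the 2-qubit pure state system is exactly $2$.
   Context: Let $\sigma_1=\begin{pmatrix}0&1\\1&0\end{pmatrix}$, $\sigma_2=\begin{pmatrix}0&-i\\i&0\end{pmatrix}$, $\sigma_3=\begin{pmatrix}1&0\\0&-1\end{pmatrix}$. For a 2-qubit density matrix $\rho$ its Bloch vector is $(b_1,\dots,b_{16})$, where $b_1=\operatorname{tr}\rho=1$; $(b_2,b_3,b_4)=\boldsymbol{\alpha}$ with $\alpha_j=\operatorname{tr}((\sigma_j\otimes I)\rho)$; $(b_5,b_6,b_7)=\boldsymbol{\beta}$ with $\beta_j=\operatorname{tr}((I\otimes\sigma_j)\rho)$; and $(b_8,\dots,b_{16})$ are the entries $C_{jk}=\operatorname{tr}((\sigma_j\otimes\sigma_k)\rho)$ of the $3\times3$ correlation matrix $C$ listed in row-major order. A pure state is $\rho=|\psi\rangle\langle\psi|$ with $|\psi\rangle\in\mathbb{C}^2\otimes\mathbb{C}^2$ a unit vector. For $b\in[-1,1]$ and $h\in(-1,1)$ define $D_{\chi^2}(b,h)=\frac{((b+1)/2)^2}{(h+1)/2}+\frac{((1-b)/2)^2}{(1-h)/2}-1$; if $h=\pm1$ and $b=h$, set $D_{\chi^2}(b,h)=0$. The posterior $\chi^2$ divergence information content of a 2-qubit pure state with Bloch vector $(b_1,\dots,b_{16})$ is defined as follows. For each $i=2,\dots,16$,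 let $b_i^{max}$ and $b_i^{min}$ be the maximum and the minimum of the $i$-th Bloch component over all 2-qubit pure states whose Bloch components $1,\dots,i-1$ coincide with $b_1,\dots,b_{i-1}$. Put $h_i=(b_i^{max}+b_i^{min})/2$. Then $I_{\chi^2,post}=\sum_{i=2}^{16}D_{\chi^2}(b_i,h_i)$. *)

theory Defs
  imports Complex_Main
begin

text \<open>Single-qubit Pauli matrices as functions on indices 0,1:
  index 0 is the identity, 1,2,3 are sigma_1, sigma_2, sigma_3.\<close>
definition pauli :: "nat \<Rightarrow> nat \<Rightarrow> nat \<Rightarrow> complex" where
  "pauli m r s =
     (if m = 0 then (if r = s then 1 else 0)
      else if m = 1 then (if r \<noteq> s then 1 else 0)
      else if m = 2 then (if r = 0 \<and> s = 1 then - \<i> else if r = 1 \<and> s = 0 then \<i> else 0)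
      else (if r = s then (if r = 0 then 1 else -1) else 0))"

text \<open>Kronecker product on C^2 (x) C^2, basis |a b> at index 2a+b.\<close>
definition tensor2 :: "(nat \<Rightarrow> nat \<Rightarrow> complex) \<Rightarrow> (nat \<Rightarrow> nat \<Rightarrow> complex) \<Rightarrow> nat \<Rightarrow> nat \<Rightarrow> complex" where
  "tensor2 A B r s = A (r div 2) (s div 2) * B (r mod 2) (s mod 2)"

text \<open>Pair of Pauli indices (for first and second qubit) for Bloch component i (1..16):
  1: I(x)I; 2..4: sigma_j(x)I; 5..7: I(x)sigma_j; 8..16: sigma_j(x)sigma_k row-major.\<close>
definition bloch_idx :: "nat \<Rightarrow> nat \<times> nat" where
  "bloch_idx i =
     (if i = 1 then (0, 0)
      else if 2 \<le> i \<and> i \<le> 4 then (i - 1, 0)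
      else if 5 \<le> i \<and> i \<le> 7 then (0, i - 4)
      else ((i - 8) div 3 + 1, (i - 8) mod 3 + 1))"

definition obs :: "nat \<Rightarrow> nat \<Rightarrow> nat \<Rightarrow> complex" where
  "obs i = tensor2 (pauli (fst (bloch_idx i))) (pauli (snd (bloch_idx i)))"

definition pure_state :: "(nat \<Rightarrow> complex) \<Rightarrow> bool" where
  "pure_state psi \<longleftrightarrow> (\<Sum>r<4. (cmod (psi r))\<^sup>2) = 1"

text \<open>Bloch component i of rho = |psi><psi|: tr(obs_i rho) = <psi| obs_i |psi> (real, as obs_i is Hermitian).\<close>
definition bloch :: "(nat \<Rightarrow> complex) \<Rightarrow> nat \<Rightarrow> real" where
  "bloch psi i = Re (\<Sum>r<4. \<Sum>s<4. cnj (psi r) * obs i r s * psi s)"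

definition cond_vals :: "(nat \<Rightarrow> complex) \<Rightarrow> nat \<Rightarrow> real set" where
  "cond_vals psi i = {bloch phi i | phi. pure_state phi \<and> (\<forall>j\<in>{1..<i}. bloch phi j = bloch psi j)}"

definition bmax :: "(nat \<Rightarrow> complex) \<Rightarrow> nat \<Rightarrow> real" where
  "bmax psi i = Sup (cond_vals psi i)"

definition bmin :: "(nat \<Rightarrow> complex) \<Rightarrow> nat \<Rightarrow> real" where
  "bmin psi i = Inf (cond_vals psi i)"

definition hmid :: "(nat \<Rightarrow> complex) \<Rightarrow> nat \<Rightarrow> real" where
  "hmid psi i = (bmax psi i + bmin psi i) / 2"

text \<open>chi^2 divergence; the boundary case h = +-1 (where necessarily b = h) is 0.\<close>
definition D_chi2 :: "real \<Rightarrow> real \<Rightarrow> real" where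
  "D_chi2 b h =
     (if h = 1 \<or> h = -1 then 0
      else ((b + 1) / 2)\<^sup>2 / ((h + 1) / 2) + ((1 - b) / 2)\<^sup>2 / ((1 - h) / 2) - 1)"

definition I_chi2_post :: "(nat \<Rightarrow> complex) \<Rightarrow> real" where
  "I_chi2_post psi = (\<Sum>i=2..16. D_chi2 (bloch psi i) (hmid psi i))"

end

theory Submission
  imports Defs
begin

(* The Bloch vector of a pure two-qubit state consists of the reduced Bloch vectors alpha and
   beta, which have a common squared length r <= 1, and the correlation matrix C, which satisfies
   C beta = alpha and C C^T = (1 - r) I + alpha alpha^T.

   A posterior term equals the square of its component when a local Pauli operation (or its
   composition with complex conjugation) negates that component while fixing all earlier ones, as
   the conditional values are then symmetric about 0; it is at most that square when the earlier
   components determine the component up to sign.  This covers all components of alpha and beta,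
   so they contribute at most |alpha|^2 + |beta|^2 = 2 r.

   For r > 0, alpha and beta confine every entry of C to an interval [a - s rho, a + s rho] with
   s^2 = 1 - r and |a| + rho <= 1, and the midpoint of any such set has chi^2 divergence at most s^2
   from each of its points.  The third row of C is determined by the earlier components, and so is
   either the second row (if alpha_2 or alpha_3 is nonzero) or the first one; in each remaining row
   C beta = alpha fixes the last entry whose beta-coefficient is nonzero.  Hence at most two
   correlation terms are nonzero and they contribute at most 2 (1 - r).  For r = 0 the matrix C is
   orthogonal, and each of its first two rows contributes at most its squared length 1.

   The bound is attained at |00>, where only the terms of alpha_3 and beta_3 survive, both equal
   to 1. *)

section \<open>The chi-square divergence from the midpoint of a set\<close>

lemma D_chi2_self: "D_chi2 b b = 0"
proof (cases "b = 1 \<or> b = -1")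
  case False
  have sq_div: "x\<^sup>2 / x = x" if "x \<noteq> 0" for x :: real
    using that by (simp add: power2_eq_square)
  have "D_chi2 b b = ((b + 1) / 2)\<^sup>2 / ((b + 1) / 2) + ((1 - b) / 2)\<^sup>2 / ((1 - b) / 2) - 1"
    using False by (simp add: D_chi2_def)
  also have "\<dots> = (b + 1) / 2 + (1 - b) / 2 - 1"
    using False by (subst (1 2) sq_div) auto
  also have "\<dots> = 0" by (simp add: field_simps)
  finally show ?thesis .
qed (auto simp: D_chi2_def)

lemma D_chi2_at_0: "D_chi2 b 0 = b\<^sup>2"
  by (simp add: D_chi2_def field_simps power2_eq_square)

lemma D_chi2_eq:
  assumes "\<bar>h\<bar> < 1"
  shows "D_chi2 b h = (b - h)\<^sup>2 / (1 - h\<^sup>2)"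
proof -
  have "1 + h \<noteq> 0" "1 - h \<noteq> 0" using assms by auto
  moreover have "1 - h\<^sup>2 = (1 + h) * (1 - h)" by (simp add: power2_eq_square algebra_simps)
  ultimately show ?thesis using assms
    by (simp add: D_chi2_def add.commute[of h] divide_simps) (simp add: power2_eq_square algebra_simps)
qed

lemma midpoint_eq_0_if_symmetric:
  fixes S :: "real set"
  assumes "uminus ` S = S"
  shows "(Sup S + Inf S) / 2 = 0"
  using assms by (simp add: Inf_real_def)

lemma halfwidth_sq_le:
  fixes m M a s \<rho> :: real
  assumes "a - s * \<rho> \<le> m" "m \<le> M" "M \<le> a + s * \<rho>"
    and "\<bar>a\<bar> + \<rho> \<le> 1" "0 \<le> s" "s \<le> 1" "0 \<le> \<rho>"
  shows "((M - m) / 2)\<^sup>2 \<le> s\<^sup>2 * (1 - ((M + m) / 2)\<^sup>2)"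
proof -
  define t h where "t = (M - m) / 2" and "h = (M + m) / 2"
  define K where "K = 1 - \<rho> + s * \<rho>"
  have t: "0 \<le> t" "t \<le> s * \<rho>" using assms by (auto simp: t_def)
  have K: "0 \<le> K" "K \<le> 1" using assms by (auto simp: K_def mult_left_le_one_le)
  have "M \<le> K" "- m \<le> K"
    using assms abs_ge_self[of a] abs_ge_minus_self[of a] by (simp_all add: K_def)
  moreover have "M = h + t" "- m = t - h" by (simp_all add: h_def t_def field_simps)
  ultimately have "h \<le> K - t" "- h \<le> K - t" by linarith+
  then have "h\<^sup>2 \<le> (K - t)\<^sup>2"
    by (simp add: abs_le_square_iff[symmetric] abs_le_iff)
  then have "t\<^sup>2 + s\<^sup>2 * h\<^sup>2 \<le> t\<^sup>2 + s\<^sup>2 * (K - t)\<^sup>2"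
    by (simp add: mult_left_mono)
  also have "\<dots> \<le> s\<^sup>2"
  proof -
    \<comment> \<open>a convex function of \<open>t\<close> that is at most \<open>s\<^sup>2\<close> at both ends of \<open>[0, s \<rho>]\<close>\<close>
    define c where "c = 2 * s\<^sup>2 * K - (1 + s\<^sup>2) * s * \<rho>"
    have split: "s\<^sup>2 - (t\<^sup>2 + s\<^sup>2 * (K - t)\<^sup>2)
        = s\<^sup>2 * (1 - K\<^sup>2) + t * c + (1 + s\<^sup>2) * t * (s * \<rho> - t)"
      by (simp add: c_def power2_eq_square algebra_simps)
    have "0 \<le> s\<^sup>2 * (1 - K\<^sup>2) + t * c"
    proof (cases "0 \<le> c")
      case True
      with K t show ?thesis by (simp add: abs_square_le_1)
    next
      case False
      then have "s * \<rho> * c \<le> t * c" using t by (intro mult_right_mono_neg) auto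
      moreover have "s\<^sup>2 * (1 - K\<^sup>2) + s * \<rho> * c = 2 * s\<^sup>2 * \<rho> * (1 - \<rho>)"
        by (simp add: c_def K_def power2_eq_square algebra_simps)
      moreover have "0 \<le> 2 * s\<^sup>2 * \<rho> * (1 - \<rho>)" using assms by simp
      ultimately show ?thesis by linarith
    qed
    moreover have "0 \<le> (1 + s\<^sup>2) * t * (s * \<rho> - t)" using t by simp
    ultimately show ?thesis using split by linarith
  qed
  finally show ?thesis by (simp add: t_def h_def algebra_simps)
qed

lemma D_chi2_midpoint_le:
  fixes S :: "real set"
  assumes "b \<in> S" "S \<subseteq> {a - s * \<rho> .. a + s * \<rho>}"
    and "\<bar>a\<bar> + \<rho> \<le> 1" "0 \<le> s" "s \<le> 1" "0 \<le> \<rho>"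
  shows "D_chi2 b ((Sup S + Inf S) / 2) \<le> s\<^sup>2"
proof -
  define M m h where "M = Sup S" and "m = Inf S" and "h = (M + m) / 2"
  have ne: "S \<noteq> {}" using assms(1) by blast
  have "bdd_above S" "bdd_below S"
    using assms(2) by (auto intro: bdd_above_mono bdd_below_mono)
  then have b: "m \<le> b" "b \<le> M"
    using assms(1) by (auto simp: M_def m_def intro: cInf_lower cSup_upper)
  have range: "a - s * \<rho> \<le> m" "M \<le> a + s * \<rho>"
    using assms(2) ne by (auto simp: M_def m_def intro!: cInf_greatest cSup_least)
  show ?thesis
  proof (cases "h = 1 \<or> h = -1")
    case True
    then show ?thesis by (simp add: D_chi2_def flip: h_def M_def m_def)
  next
    case False
    have "s * \<rho> \<le> \<rho>" using assms by (simp add: mult_left_le_one_le)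
    then have "\<bar>h\<bar> \<le> 1"
      using range b assms(3) abs_ge_self[of a] abs_ge_minus_self[of a] by (simp add: h_def abs_le_iff)
    with False have h: "\<bar>h\<bar> < 1" by auto
    have "b - h \<le> (M - m) / 2" using b by (simp add: h_def field_simps)
    moreover have "h - b \<le> (M - m) / 2" using b by (simp add: h_def field_simps)
    ultimately have "\<bar>b - h\<bar> \<le> (M - m) / 2" by (intro abs_leI; linarith)
    then have "(b - h)\<^sup>2 \<le> ((M - m) / 2)\<^sup>2" by (simp add: abs_le_square_iff[symmetric])
    also have "\<dots> \<le> s\<^sup>2 * (1 - h\<^sup>2)"
      unfolding h_def using halfwidth_sq_le[OF range(1) _ range(2) assms(3-6)] b by simp
    finally have "(b - h)\<^sup>2 / (1 - h\<^sup>2) \<le> s\<^sup>2"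
      using h by (simp add: pos_divide_le_eq abs_square_less_1)
    then show ?thesis using D_chi2_eq[OF h] by (simp add: h_def M_def m_def)
  qed
qed

lemma abs_mult_add_sqrt_le_1:
  fixes u v :: real
  assumes "u\<^sup>2 \<le> 1" "v\<^sup>2 \<le> 1"
  shows "\<bar>u * v\<bar> + sqrt ((1 - u\<^sup>2) * (1 - v\<^sup>2)) \<le> 1"
proof -
  have "0 \<le> (\<bar>u\<bar> - \<bar>v\<bar>)\<^sup>2" by simp
  then have amgm: "2 * \<bar>u * v\<bar> \<le> u\<^sup>2 + v\<^sup>2" by (simp add: power2_diff abs_mult)
  have "(1 - u\<^sup>2) * (1 - v\<^sup>2) \<le> (1 - \<bar>u * v\<bar>)\<^sup>2"
    using amgm by (simp add: power2_diff power_mult_distrib algebra_simps)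
  moreover have "0 \<le> 1 - \<bar>u * v\<bar>" using amgm assms by linarith
  ultimately have "sqrt ((1 - u\<^sup>2) * (1 - v\<^sup>2)) \<le> 1 - \<bar>u * v\<bar>" by (rule real_le_lsqrt[rotated])
  then show ?thesis by simp
qed

lemma D_chi2_midpoint_le_of_sq_bound:
  fixes S :: "real set"
  assumes "b \<in> S" "\<And>x. x \<in> S \<Longrightarrow> (x - u * v)\<^sup>2 \<le> (1 - r) * ((1 - u\<^sup>2) * (1 - v\<^sup>2))"
    and "u\<^sup>2 \<le> 1" "v\<^sup>2 \<le> 1" "0 \<le> r" "r \<le> 1"
  shows "D_chi2 b ((Sup S + Inf S) / 2) \<le> 1 - r"
proof -
  define s \<rho> where "s = sqrt (1 - r)" and "\<rho> = sqrt ((1 - u\<^sup>2) * (1 - v\<^sup>2))"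
  have "S \<subseteq> {u * v - s * \<rho> .. u * v + s * \<rho>}"
  proof
    fix x assume "x \<in> S"
    then have "\<bar>x - u * v\<bar> \<le> s * \<rho>"
      using assms(2) by (simp add: s_def \<rho>_def real_le_rsqrt flip: real_sqrt_mult)
    then show "x \<in> {u * v - s * \<rho> .. u * v + s * \<rho>}" by (simp add: abs_le_iff)
  qed
  moreover have "0 \<le> \<rho>" using assms(3,4) by (simp add: \<rho>_def)
  moreover have "\<bar>u * v\<bar> + \<rho> \<le> 1" using abs_mult_add_sqrt_le_1[OF assms(3,4)] by (simp add: \<rho>_def)
  moreover have "0 \<le> s" "s \<le> 1" using assms(5,6) by (simp_all add: s_def)
  ultimately have "D_chi2 b ((Sup S + Inf S) / 2) \<le> s\<^sup>2"
    by (intro D_chi2_midpoint_le[OF assms(1)])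
  then show ?thesis using assms(6) by (simp add: s_def)
qed

section \<open>Rows of a correlation matrix\<close>

lemma orthogonal_component_sq_le:
  fixes u1 u2 u3 b1 b2 b3 :: real
  assumes "u1 * b1 + u2 * b2 + u3 * b3 = 0"
  shows "(b1\<^sup>2 + b2\<^sup>2 + b3\<^sup>2) * u1\<^sup>2 \<le> (u1\<^sup>2 + u2\<^sup>2 + u3\<^sup>2) * (b2\<^sup>2 + b3\<^sup>2)"
proof -
  have "(u1\<^sup>2 + u2\<^sup>2 + u3\<^sup>2) * (b2\<^sup>2 + b3\<^sup>2) - (b1\<^sup>2 + b2\<^sup>2 + b3\<^sup>2) * u1\<^sup>2
      = (u2 * b3 - u3 * b2)\<^sup>2 + (u2 * b2 + u3 * b3)\<^sup>2 - (u1 * b1)\<^sup>2"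
    by algebra
  moreover have "u1 * b1 = - (u2 * b2 + u3 * b3)" using assms by linarith
  then have "(u1 * b1)\<^sup>2 = (u2 * b2 + u3 * b3)\<^sup>2" by (metis power2_minus)
  ultimately show ?thesis using zero_le_power2[of "u2 * b3 - u3 * b2"] by linarith
qed

lemma row_deviation_norm:
  fixes b1 b2 b3 c1 c2 c3 a r :: real
  assumes "b1\<^sup>2 + b2\<^sup>2 + b3\<^sup>2 = r" "c1 * b1 + c2 * b2 + c3 * b3 = a"
    and "c1\<^sup>2 + c2\<^sup>2 + c3\<^sup>2 = 1 - r + a\<^sup>2"
  shows "(r * c1 - a * b1)\<^sup>2 + (r * c2 - a * b2)\<^sup>2 + (r * c3 - a * b3)\<^sup>2 = r * (1 - r) * (r - a\<^sup>2)"
proof -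
  have "(r * c1 - a * b1)\<^sup>2 + (r * c2 - a * b2)\<^sup>2 + (r * c3 - a * b3)\<^sup>2
      = r\<^sup>2 * (c1\<^sup>2 + c2\<^sup>2 + c3\<^sup>2) - 2 * r * a * (c1 * b1 + c2 * b2 + c3 * b3)
        + a\<^sup>2 * (b1\<^sup>2 + b2\<^sup>2 + b3\<^sup>2)"
    by algebra
  also have "\<dots> = r\<^sup>2 * (1 - r + a\<^sup>2) - 2 * r * a * a + a\<^sup>2 * r"
    by (simp only: assms)
  also have "\<dots> = r * (1 - r) * (r - a\<^sup>2)"
    by algebra
  finally show ?thesis .
qed

lemma row_entry_bound:
  fixes b1 b2 b3 c1 c2 c3 a r :: real
  assumes "b1\<^sup>2 + b2\<^sup>2 + b3\<^sup>2 = r" "c1 * b1 + c2 * b2 + c3 * b3 = a"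
    and "c1\<^sup>2 + c2\<^sup>2 + c3\<^sup>2 = 1 - r + a\<^sup>2" and "0 < r"
  shows "(r * c1 - a * b1)\<^sup>2 \<le> (1 - r) * (r - a\<^sup>2) * (r - b1\<^sup>2)"
proof -
  have "(r * c1 - a * b1) * b1 + (r * c2 - a * b2) * b2 + (r * c3 - a * b3) * b3
      = r * (c1 * b1 + c2 * b2 + c3 * b3) - a * (b1\<^sup>2 + b2\<^sup>2 + b3\<^sup>2)"
    by algebra
  also have "\<dots> = 0" using assms(1,2) by simp
  finally have "r * (r * c1 - a * b1)\<^sup>2 \<le> r * (1 - r) * (r - a\<^sup>2) * (b2\<^sup>2 + b3\<^sup>2)"
    using orthogonal_component_sq_le row_deviation_norm[OF assms(1-3)] assms(1) by metis
  also have "b2\<^sup>2 + b3\<^sup>2 = r - b1\<^sup>2" using assms(1) by simp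
  finally show ?thesis using assms(4) by (simp add: mult.assoc)
qed

lemma row_bound_normalized:
  fixes x r A B :: real
  assumes "(r * x - A * B)\<^sup>2 \<le> (1 - r) * (r - A\<^sup>2) * (r - B\<^sup>2)" "0 < r"
  shows "(x - A / sqrt r * (B / sqrt r))\<^sup>2 \<le> (1 - r) * ((1 - (A / sqrt r)\<^sup>2) * (1 - (B / sqrt r)\<^sup>2))"
proof -
  have "A / sqrt r * (B / sqrt r) = A * B / r" "(A / sqrt r)\<^sup>2 = A\<^sup>2 / r" "(B / sqrt r)\<^sup>2 = B\<^sup>2 / r"
    using assms(2) by (simp_all add: power_divide)
  moreover have "(x - A * B / r)\<^sup>2 = (r * x - A * B)\<^sup>2 / r\<^sup>2"
    using assms(2) by (simp add: power_divide[symmetric] diff_divide_distrib)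
  moreover have "(1 - r) * ((1 - A\<^sup>2 / r) * (1 - B\<^sup>2 / r)) = (1 - r) * (r - A\<^sup>2) * (r - B\<^sup>2) / r\<^sup>2"
    using assms(2) by (simp add: field_simps power2_eq_square)
  ultimately show ?thesis using assms by (simp add: divide_right_mono)
qed

section \<open>Bloch vectors of pure states\<close>

lemma sum_lessThan_4: "(\<Sum>r<(4::nat). f r) = f 0 + f 1 + f 2 + (f 3 :: 'a :: comm_monoid_add)"
  by (simp add: eval_nat_numeral add.assoc)

text \<open>Simp normalises the numeral \<open>1 :: nat\<close> to \<open>Suc 0\<close>, so these equations are best used by
  unfolding.\<close>

lemma bloch_expand:
  fixes psi :: "nat \<Rightarrow> complex"
  defines "x \<equiv> \<lambda>k. Re (psi k)" and "y \<equiv> \<lambda>k. Im (psi k)"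
  shows
  "bloch psi 1 = x 0 * x 0 + x 1 * x 1 + x 2 * x 2 + x 3 * x 3 + y 0 * y 0 + y 1 * y 1 + y 2 * y 2 + y 3 * y 3"
  "bloch psi 2 = 2 * (x 0 * x 2 + x 1 * x 3 + y 0 * y 2 + y 1 * y 3)"
  "bloch psi 3 = 2 * (x 0 * y 2 + x 1 * y 3 - x 2 * y 0 - x 3 * y 1)"
  "bloch psi 4 = x 0 * x 0 + x 1 * x 1 - x 2 * x 2 - x 3 * x 3 + y 0 * y 0 + y 1 * y 1 - y 2 * y 2 - y 3 * y 3"
  "bloch psi 5 = 2 * (x 0 * x 1 + x 2 * x 3 + y 0 * y 1 + y 2 * y 3)"
  "bloch psi 6 = 2 * (x 0 * y 1 - x 1 * y 0 + x 2 * y 3 - x 3 * y 2)"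
  "bloch psi 7 = x 0 * x 0 - x 1 * x 1 + x 2 * x 2 - x 3 * x 3 + y 0 * y 0 - y 1 * y 1 + y 2 * y 2 - y 3 * y 3"
  "bloch psi 8 = 2 * (x 0 * x 3 + x 1 * x 2 + y 0 * y 3 + y 1 * y 2)"
  "bloch psi 9 = 2 * (x 0 * y 3 - x 1 * y 2 + x 2 * y 1 - x 3 * y 0)"
  "bloch psi 10 = 2 * (x 0 * x 2 - x 1 * x 3 + y 0 * y 2 - y 1 * y 3)"
  "bloch psi 11 = 2 * (x 0 * y 3 + x 1 * y 2 - x 2 * y 1 - x 3 * y 0)"
  "bloch psi 12 = 2 * (x 1 * x 2 - x 0 * x 3 + y 1 * y 2 - y 0 * y 3)"
  "bloch psi 13 = 2 * (x 0 * y 2 - x 1 * y 3 - x 2 * y 0 + x 3 * y 1)"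
  "bloch psi 14 = 2 * (x 0 * x 1 - x 2 * x 3 + y 0 * y 1 - y 2 * y 3)"
  "bloch psi 15 = 2 * (x 0 * y 1 - x 1 * y 0 - x 2 * y 3 + x 3 * y 2)"
  "bloch psi 16 = x 0 * x 0 - x 1 * x 1 - x 2 * x 2 + x 3 * x 3 + y 0 * y 0 - y 1 * y 1 - y 2 * y 2 + y 3 * y 3"
  unfolding x_def y_def bloch_def obs_def tensor2_def bloch_idx_def sum_lessThan_4
  by (simp_all add: pauli_def algebra_simps)

lemma pure_state_bloch_1: "pure_state p \<Longrightarrow> bloch p 1 = 1"
  unfolding pure_state_def sum_lessThan_4 bloch_expand cmod_power2 by (simp add: power2_eq_square)

abbreviation alpha_norm2 :: "(nat \<Rightarrow> complex) \<Rightarrow> real" where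
  "alpha_norm2 p \<equiv> (bloch p 2)\<^sup>2 + (bloch p 3)\<^sup>2 + (bloch p 4)\<^sup>2"

lemma bloch_concurrence:
  "(bloch psi 1)\<^sup>2 - alpha_norm2 psi = 4 * (cmod (psi 0 * psi 3 - psi 1 * psi 2))\<^sup>2"
  unfolding bloch_expand cmod_power2 by simp algebra

lemma pure_state_alpha_norm2_le_1:
  assumes "pure_state p"
  shows "alpha_norm2 p \<le> 1"
proof -
  have "1 - alpha_norm2 p = 4 * (cmod (p 0 * p 3 - p 1 * p 2))\<^sup>2"
    using bloch_concurrence[of p] pure_state_bloch_1[OF assms] by simp
  then show ?thesis using zero_le_power2[of "cmod (p 0 * p 3 - p 1 * p 2)"] by linarith
qed

lemma bloch_beta_norm2: "(bloch p 5)\<^sup>2 + (bloch p 6)\<^sup>2 + (bloch p 7)\<^sup>2 = alpha_norm2 p"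
  unfolding bloch_expand by algebra

lemma bloch_local_sq_le_alpha_norm2:
  assumes "a \<in> {2, 3, 4}"
  shows "(bloch p a)\<^sup>2 \<le> alpha_norm2 p" and "(bloch p (a + 3))\<^sup>2 \<le> alpha_norm2 p"
proof -
  have "(bloch p 2)\<^sup>2 \<le> alpha_norm2 p" "(bloch p 3)\<^sup>2 \<le> alpha_norm2 p" "(bloch p 4)\<^sup>2 \<le> alpha_norm2 p"
    "(bloch p 5)\<^sup>2 \<le> alpha_norm2 p" "(bloch p 6)\<^sup>2 \<le> alpha_norm2 p" "(bloch p 7)\<^sup>2 \<le> alpha_norm2 p"
    using bloch_beta_norm2[of p] zero_le_power2[of "bloch p 2"] zero_le_power2[of "bloch p 3"]
      zero_le_power2[of "bloch p 4"] zero_le_power2[of "bloch p 5"] zero_le_power2[of "bloch p 6"]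
      zero_le_power2[of "bloch p 7"]
    by argo+
  with assms show "(bloch p a)\<^sup>2 \<le> alpha_norm2 p" and "(bloch p (a + 3))\<^sup>2 \<le> alpha_norm2 p"
    by auto
qed

text \<open>For \<open>a, k \<in> {2, 3, 4}\<close>, the components \<open>a\<close> and \<open>k + 3\<close> are entry \<open>a - 1\<close> of \<open>\<alpha>\<close>
  and entry \<open>k - 1\<close> of \<open>\<beta>\<close>, and the component \<open>3 a + k\<close> is the entry \<open>(a - 1, k - 1)\<close> of \<open>C\<close>.\<close>

lemma pure_state_corr_row:
  assumes "pure_state p" "a \<in> {2, 3, 4}"
  shows "bloch p (3 * a + 2) * bloch p 5 + bloch p (3 * a + 3) * bloch p 6 + bloch p (3 * a + 4) * bloch p 7
      = bloch p a"
    and "(bloch p (3 * a + 2))\<^sup>2 + (bloch p (3 * a + 3))\<^sup>2 + (bloch p (3 * a + 4))\<^sup>2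
      = 1 - alpha_norm2 p + (bloch p a)\<^sup>2"
proof -
  have "bloch p 8 * bloch p 5 + bloch p 9 * bloch p 6 + bloch p 10 * bloch p 7 = bloch p 2"
    "bloch p 11 * bloch p 5 + bloch p 12 * bloch p 6 + bloch p 13 * bloch p 7 = bloch p 3"
    "bloch p 14 * bloch p 5 + bloch p 15 * bloch p 6 + bloch p 16 * bloch p 7 = bloch p 4"
    "(bloch p 8)\<^sup>2 + (bloch p 9)\<^sup>2 + (bloch p 10)\<^sup>2 = 1 - alpha_norm2 p + (bloch p 2)\<^sup>2"
    "(bloch p 11)\<^sup>2 + (bloch p 12)\<^sup>2 + (bloch p 13)\<^sup>2 = 1 - alpha_norm2 p + (bloch p 3)\<^sup>2"
    "(bloch p 14)\<^sup>2 + (bloch p 15)\<^sup>2 + (bloch p 16)\<^sup>2 = 1 - alpha_norm2 p + (bloch p 4)\<^sup>2"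
    using pure_state_bloch_1[OF assms(1)] unfolding bloch_expand by algebra+
  with assms(2) show "bloch p (3 * a + 2) * bloch p 5 + bloch p (3 * a + 3) * bloch p 6
      + bloch p (3 * a + 4) * bloch p 7 = bloch p a"
    and "(bloch p (3 * a + 2))\<^sup>2 + (bloch p (3 * a + 3))\<^sup>2 + (bloch p (3 * a + 4))\<^sup>2
      = 1 - alpha_norm2 p + (bloch p a)\<^sup>2"
    by auto
qed

lemma bloch_corr_rows_orthogonal:
  "bloch p 8 * bloch p 11 + bloch p 9 * bloch p 12 + bloch p 10 * bloch p 13 = bloch p 2 * bloch p 3"
  unfolding bloch_expand by algebra

lemma pure_state_corr_row3:
  assumes "pure_state p"
  shows "bloch p 14 = bloch p 4 * bloch p 5 - (bloch p 9 * bloch p 13 - bloch p 10 * bloch p 12)"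
    and "bloch p 15 = bloch p 4 * bloch p 6 - (bloch p 10 * bloch p 11 - bloch p 8 * bloch p 13)"
    and "bloch p 16 = bloch p 4 * bloch p 7 - (bloch p 8 * bloch p 12 - bloch p 9 * bloch p 11)"
  using pure_state_bloch_1[OF assms] unfolding bloch_expand by algebra+

lemma pure_state_corr_row2:
  assumes "pure_state p" and "(bloch p 3)\<^sup>2 + (bloch p 4)\<^sup>2 \<noteq> 0"
  shows "bloch p 11 = (bloch p 3 * bloch p 5 - bloch p 4 * (bloch p 6 * bloch p 10 - bloch p 7 * bloch p 9)
      - bloch p 2 * bloch p 3 * bloch p 8) / ((bloch p 3)\<^sup>2 + (bloch p 4)\<^sup>2)"
    and "bloch p 12 = (bloch p 3 * bloch p 6 - bloch p 4 * (bloch p 7 * bloch p 8 - bloch p 5 * bloch p 10)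
      - bloch p 2 * bloch p 3 * bloch p 9) / ((bloch p 3)\<^sup>2 + (bloch p 4)\<^sup>2)"
    and "bloch p 13 = (bloch p 3 * bloch p 7 - bloch p 4 * (bloch p 5 * bloch p 9 - bloch p 6 * bloch p 8)
      - bloch p 2 * bloch p 3 * bloch p 10) / ((bloch p 3)\<^sup>2 + (bloch p 4)\<^sup>2)"
proof -
  have "((bloch p 3)\<^sup>2 + (bloch p 4)\<^sup>2) * bloch p 11 = bloch p 3 * bloch p 5
      - bloch p 4 * (bloch p 6 * bloch p 10 - bloch p 7 * bloch p 9) - bloch p 2 * bloch p 3 * bloch p 8"
    "((bloch p 3)\<^sup>2 + (bloch p 4)\<^sup>2) * bloch p 12 = bloch p 3 * bloch p 6
      - bloch p 4 * (bloch p 7 * bloch p 8 - bloch p 5 * bloch p 10) - bloch p 2 * bloch p 3 * bloch p 9"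
    "((bloch p 3)\<^sup>2 + (bloch p 4)\<^sup>2) * bloch p 13 = bloch p 3 * bloch p 7
      - bloch p 4 * (bloch p 5 * bloch p 9 - bloch p 6 * bloch p 8) - bloch p 2 * bloch p 3 * bloch p 10"
    using pure_state_bloch_1[OF assms(1)] unfolding bloch_expand by algebra+
  then show "bloch p 11 = (bloch p 3 * bloch p 5 - bloch p 4 * (bloch p 6 * bloch p 10 - bloch p 7 * bloch p 9)
      - bloch p 2 * bloch p 3 * bloch p 8) / ((bloch p 3)\<^sup>2 + (bloch p 4)\<^sup>2)"
    and "bloch p 12 = (bloch p 3 * bloch p 6 - bloch p 4 * (bloch p 7 * bloch p 8 - bloch p 5 * bloch p 10)
      - bloch p 2 * bloch p 3 * bloch p 9) / ((bloch p 3)\<^sup>2 + (bloch p 4)\<^sup>2)"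
    and "bloch p 13 = (bloch p 3 * bloch p 7 - bloch p 4 * (bloch p 5 * bloch p 9 - bloch p 6 * bloch p 8)
      - bloch p 2 * bloch p 3 * bloch p 10) / ((bloch p 3)\<^sup>2 + (bloch p 4)\<^sup>2)"
    using assms(2) by (simp_all add: nonzero_eq_divide_eq mult.commute)
qed

lemma pure_state_corr_entry_bound:
  assumes p: "pure_state p" and r: "0 < alpha_norm2 p" and a: "a \<in> {2, 3, 4}" and k: "k \<in> {2, 3, 4}"
  shows "(alpha_norm2 p * bloch p (3 * a + k) - bloch p a * bloch p (k + 3))\<^sup>2
    \<le> (1 - alpha_norm2 p) * (alpha_norm2 p - (bloch p a)\<^sup>2) * (alpha_norm2 p - (bloch p (k + 3))\<^sup>2)"
proof -
  define r c1 c2 c3 where "r = alpha_norm2 p" and "c1 = bloch p (3 * a + 2)"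
    and "c2 = bloch p (3 * a + 3)" and "c3 = bloch p (3 * a + 4)"
  have \<beta>: "(bloch p 5)\<^sup>2 + (bloch p 6)\<^sup>2 + (bloch p 7)\<^sup>2 = r" by (simp add: r_def bloch_beta_norm2)
  have row: "c1 * bloch p 5 + c2 * bloch p 6 + c3 * bloch p 7 = bloch p a"
    "c1\<^sup>2 + c2\<^sup>2 + c3\<^sup>2 = 1 - r + (bloch p a)\<^sup>2"
    using pure_state_corr_row[OF p a] by (simp_all add: r_def c1_def c2_def c3_def)
  have r0: "0 < r" using r by (simp add: r_def)
  from k consider "k = 2" | "k = 3" | "k = 4" by blast
  then show ?thesis
  proof cases
    case 1
    then show ?thesis using row_entry_bound[OF \<beta> row r0] by (simp add: r_def c1_def)
  next
    case 2
    have "(r * c2 - bloch p a * bloch p 6)\<^sup>2 \<le> (1 - r) * (r - (bloch p a)\<^sup>2) * (r - (bloch p 6)\<^sup>2)"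
      by (rule row_entry_bound[of "bloch p 6" "bloch p 7" "bloch p 5" r c2 c3 c1]) (use \<beta> row r0 in linarith)+
    with 2 show ?thesis by (simp add: r_def c2_def)
  next
    case 3
    have "(r * c3 - bloch p a * bloch p 7)\<^sup>2 \<le> (1 - r) * (r - (bloch p a)\<^sup>2) * (r - (bloch p 7)\<^sup>2)"
      by (rule row_entry_bound[of "bloch p 7" "bloch p 5" "bloch p 6" r c3 c1 c2]) (use \<beta> row r0 in linarith)+
    with 3 show ?thesis by (simp add: r_def c3_def)
  qed
qed

lemma pure_state_corr_entry_degenerate:
  assumes p: "pure_state p" and a: "a \<in> {2, 3, 4}" and k: "k \<in> {2, 3, 4}"
    and degenerate: "alpha_norm2 p * (1 - alpha_norm2 p) * (alpha_norm2 p - (bloch p a)\<^sup>2) = 0"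
  shows "alpha_norm2 p * bloch p (3 * a + k) = bloch p a * bloch p (k + 3)"
proof -
  define r where "r = alpha_norm2 p"
  have "(r * bloch p (3 * a + 2) - bloch p a * bloch p 5)\<^sup>2 + (r * bloch p (3 * a + 3) - bloch p a * bloch p 6)\<^sup>2
      + (r * bloch p (3 * a + 4) - bloch p a * bloch p 7)\<^sup>2 = 0"
    using row_deviation_norm[OF bloch_beta_norm2 pure_state_corr_row[OF p a]] degenerate
    by (simp add: r_def)
  then have "r * bloch p (3 * a + 2) = bloch p a * bloch p 5" "r * bloch p (3 * a + 3) = bloch p a * bloch p 6"
    "r * bloch p (3 * a + 4) = bloch p a * bloch p 7"
    by (simp_all add: add_nonneg_eq_0_iff)
  with k show ?thesis by (auto simp: r_def)
qed

section \<open>Local sign flips\<close>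

definition flips :: "((nat \<Rightarrow> complex) \<Rightarrow> nat \<Rightarrow> complex) \<Rightarrow> nat set \<Rightarrow> bool" where
  "flips T F \<longleftrightarrow> (\<forall>p. pure_state p \<longrightarrow> pure_state (T p)) \<and>
     (\<forall>p. \<forall>j\<in>{1..16}. bloch (T p) j = (if j \<in> F then - bloch p j else bloch p j))"

lemma atLeastAtMost_1_16: "{1..16::nat} = {1, 2, 3, 4, 5, 6, 7, 8, 9, 10, 11, 12, 13, 14, 15, 16}"
  by (auto simp: numeral_eq_Suc le_Suc_eq)

definition apply_op :: "(nat \<Rightarrow> nat \<Rightarrow> complex) \<Rightarrow> (nat \<Rightarrow> complex) \<Rightarrow> nat \<Rightarrow> complex" where
  "apply_op A psi r = (\<Sum>s<4. A r s * psi s)"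

text \<open>Each observable \<open>obs i\<close> is unitary, and applying it negates exactly the components whose
  observables anticommute with it.\<close>

lemma flips_apply_op_obs4: "flips (apply_op (obs 4)) {2, 3, 8, 9, 10, 11, 12, 13}"
  unfolding flips_def atLeastAtMost_1_16 ball_simps(7) ball_empty pure_state_def bloch_expand
  unfolding apply_op_def sum_lessThan_4 obs_def tensor2_def bloch_idx_def
  by (simp add: pauli_def algebra_simps)

lemma flips_apply_op_obs2: "flips (apply_op (obs 2)) {3, 4, 11, 12, 13, 14, 15, 16}"
  unfolding flips_def atLeastAtMost_1_16 ball_simps(7) ball_empty pure_state_def bloch_expand
  unfolding apply_op_def sum_lessThan_4 obs_def tensor2_def bloch_idx_def
  by (simp add: pauli_def algebra_simps)

lemma flips_apply_op_obs7: "flips (apply_op (obs 7)) {5, 6, 8, 9, 11, 12, 14, 15}"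
  unfolding flips_def atLeastAtMost_1_16 ball_simps(7) ball_empty pure_state_def bloch_expand
  unfolding apply_op_def sum_lessThan_4 obs_def tensor2_def bloch_idx_def
  by (simp add: pauli_def algebra_simps)

lemma flips_apply_op_obs5: "flips (apply_op (obs 5)) {6, 7, 9, 10, 12, 13, 15, 16}"
  unfolding flips_def atLeastAtMost_1_16 ball_simps(7) ball_empty pure_state_def bloch_expand
  unfolding apply_op_def sum_lessThan_4 obs_def tensor2_def bloch_idx_def
  by (simp add: pauli_def algebra_simps)

text \<open>No unitary negates \<open>\<alpha>\<^sub>3\<close> alone, as it would reflect the Bloch sphere of the first qubit;
  complex conjugation composed with \<open>\<sigma>\<^sub>x \<otimes> I\<close> does.\<close>

lemma flips_conj_apply_op_obs2: "flips (\<lambda>psi r. cnj (apply_op (obs 2) psi r)) {4, 6, 9, 12, 14, 16}"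
  unfolding flips_def atLeastAtMost_1_16 ball_simps(7) ball_empty pure_state_def bloch_expand
  unfolding apply_op_def sum_lessThan_4 obs_def tensor2_def bloch_idx_def
  by (simp add: pauli_def algebra_simps)

section \<open>Posterior terms\<close>

definition agree_before :: "nat \<Rightarrow> (nat \<Rightarrow> complex) \<Rightarrow> (nat \<Rightarrow> complex) \<Rightarrow> bool" where
  "agree_before i p q \<longleftrightarrow> (\<forall>j\<in>{1..<i}. bloch p j = bloch q j)"

lemma agree_beforeD: "agree_before i p q \<Longrightarrow> 0 < j \<Longrightarrow> j < i \<Longrightarrow> bloch p j = bloch q j"
  by (simp add: agree_before_def)

lemma cond_vals_eq: "cond_vals q i = {bloch p i |p. pure_state p \<and> agree_before i p q}"
  by (simp add: cond_vals_def agree_before_def)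

lemma bloch_in_cond_vals: "pure_state q \<Longrightarrow> bloch q i \<in> cond_vals q i"
  unfolding cond_vals_eq agree_before_def by blast

lemma hmid_eq: "hmid q i = (Sup (cond_vals q i) + Inf (cond_vals q i)) / 2"
  by (simp add: hmid_def bmax_def bmin_def)

abbreviation chi2_post_term :: "(nat \<Rightarrow> complex) \<Rightarrow> nat \<Rightarrow> real" where
  "chi2_post_term q i \<equiv> D_chi2 (bloch q i) (hmid q i)"

lemma chi2_post_term_eq_0_if_determined:
  assumes "pure_state q" "\<And>p. pure_state p \<Longrightarrow> agree_before i p q \<Longrightarrow> bloch p i = bloch q i"
  shows "chi2_post_term q i = 0"
proof -
  have "cond_vals q i = {bloch q i}"
    using bloch_in_cond_vals[OF assms(1)] assms(2) by (auto simp: cond_vals_eq)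
  then show ?thesis by (simp add: hmid_eq D_chi2_self)
qed

lemma chi2_post_term_le_sq_if_determined_up_to_sign:
  assumes "pure_state q" "\<And>p. pure_state p \<Longrightarrow> agree_before i p q \<Longrightarrow> (bloch p i)\<^sup>2 = (bloch q i)\<^sup>2"
  shows "chi2_post_term q i \<le> (bloch q i)\<^sup>2"
proof -
  define S b where "S = cond_vals q i" and "b = bloch q i"
  have b: "b \<in> S" using bloch_in_cond_vals[OF assms(1)] by (simp add: S_def b_def)
  have "S \<subseteq> {b, - b}"
    using assms(2) by (auto simp: S_def b_def cond_vals_eq power2_eq_iff)
  show ?thesis
  proof (cases "- b \<in> S")
    case True
    with \<open>S \<subseteq> {b, - b}\<close> b have "S = {b, - b}" by auto
    then have "uminus ` S = S" by auto
    then show ?thesis by (simp add: hmid_eq midpoint_eq_0_if_symmetric D_chi2_at_0 flip: S_def b_def)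
  next
    case False
    with \<open>S \<subseteq> {b, - b}\<close> b have "S = {b}" by auto
    then show ?thesis by (simp add: hmid_eq D_chi2_self flip: S_def b_def)
  qed
qed

text \<open>The flip makes the set of conditional values symmetric about 0, so its midpoint is 0.\<close>

lemma chi2_post_term_eq_sq_if_flips:
  assumes q: "pure_state q" and T: "flips T F" and i: "i \<in> F" "0 < i" "i \<le> 16"
    and vanish: "\<And>j. j \<in> F \<Longrightarrow> 0 < j \<Longrightarrow> j < i \<Longrightarrow> bloch q j = 0"
  shows "chi2_post_term q i = (bloch q i)\<^sup>2"
proof -
  define S where "S = cond_vals q i"
  have neg: "- x \<in> S" if "x \<in> S" for x
  proof -
    from that obtain p where p: "pure_state p" "agree_before i p q" "x = bloch p i"
      by (auto simp: S_def cond_vals_eq)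
    have "agree_before i (T p) q"
      unfolding agree_before_def
    proof
      fix j assume j: "j \<in> {1..<i}"
      then have "bloch p j = bloch q j" using p(2) by (simp add: agree_beforeD)
      then show "bloch (T p) j = bloch q j" using T j i vanish[of j] by (auto simp: flips_def)
    qed
    moreover have "pure_state (T p)" "bloch (T p) i = - x" using T i p by (auto simp: flips_def)
    ultimately show ?thesis unfolding S_def cond_vals_eq by force
  qed
  have "uminus ` S = S"
  proof
    show "uminus ` S \<subseteq> S" using neg by auto
    show "S \<subseteq> uminus ` S" using neg by (metis image_eqI minus_minus subsetI)
  qed
  then show ?thesis by (simp add: hmid_eq midpoint_eq_0_if_symmetric D_chi2_at_0 flip: S_def)
qed

lemma chi2_post_term_le_of_sq_bound:
  assumes "pure_state q"
    and "\<And>p. pure_state p \<Longrightarrow> agree_before i p q \<Longrightarrow>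
      (bloch p i - u * v)\<^sup>2 \<le> (1 - r) * ((1 - u\<^sup>2) * (1 - v\<^sup>2))"
    and "u\<^sup>2 \<le> 1" "v\<^sup>2 \<le> 1" "0 \<le> r" "r \<le> 1"
  shows "chi2_post_term q i \<le> 1 - r"
  unfolding hmid_eq
  by (rule D_chi2_midpoint_le_of_sq_bound[OF bloch_in_cond_vals[OF assms(1)] _ assms(3-6)])
    (auto simp: cond_vals_eq assms(2))

lemma local_terms_eq_sq:
  assumes q: "pure_state q"
  shows "chi2_post_term q 2 = (bloch q 2)\<^sup>2" "chi2_post_term q 3 = (bloch q 3)\<^sup>2"
    "chi2_post_term q 4 = (bloch q 4)\<^sup>2" "chi2_post_term q 5 = (bloch q 5)\<^sup>2"
    "chi2_post_term q 6 = (bloch q 6)\<^sup>2"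
proof -
  show "chi2_post_term q 2 = (bloch q 2)\<^sup>2"
    by (rule chi2_post_term_eq_sq_if_flips[OF q flips_apply_op_obs4]) auto
  show "chi2_post_term q 3 = (bloch q 3)\<^sup>2"
    by (rule chi2_post_term_eq_sq_if_flips[OF q flips_apply_op_obs2]) auto
  show "chi2_post_term q 4 = (bloch q 4)\<^sup>2"
    by (rule chi2_post_term_eq_sq_if_flips[OF q flips_conj_apply_op_obs2]) auto
  show "chi2_post_term q 5 = (bloch q 5)\<^sup>2"
    by (rule chi2_post_term_eq_sq_if_flips[OF q flips_apply_op_obs7]) auto
  show "chi2_post_term q 6 = (bloch q 6)\<^sup>2"
    by (rule chi2_post_term_eq_sq_if_flips[OF q flips_apply_op_obs5]) auto
qed

lemma local_terms_le:
  assumes q: "pure_state q"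
  shows "chi2_post_term q 2 + chi2_post_term q 3 + chi2_post_term q 4 + chi2_post_term q 5
    + chi2_post_term q 6 + chi2_post_term q 7 \<le> 2 * alpha_norm2 q"
proof -
  have "chi2_post_term q 7 \<le> (bloch q 7)\<^sup>2"
  proof (rule chi2_post_term_le_sq_if_determined_up_to_sign[OF q])
    fix p assume "pure_state p" "agree_before 7 p q"
    then have "bloch p j = bloch q j" if "0 < j" "j < 7" for j using that by (simp add: agree_beforeD)
    then show "(bloch p 7)\<^sup>2 = (bloch q 7)\<^sup>2"
      using bloch_beta_norm2[of p] bloch_beta_norm2[of q] by simp
  qed
  then show ?thesis using local_terms_eq_sq[OF q] bloch_beta_norm2[of q] by argo
qed

lemma corr_index_exhaust: "(i :: nat) \<in> {8..16} \<Longrightarrow> \<exists>a\<in>{2, 3, 4}. \<exists>k\<in>{2, 3, 4}. i = 3 * a + k"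
  by (auto simp: numeral_eq_Suc le_Suc_eq)

lemma corr_term_le:
  assumes q: "pure_state q" and r: "0 < alpha_norm2 q" and i: "i \<in> {8..16}"
  shows "chi2_post_term q i \<le> 1 - alpha_norm2 q"
proof -
  define r where "r = alpha_norm2 q"
  from corr_index_exhaust[OF i] obtain a k where a: "a \<in> {2, 3, 4}" and k: "k \<in> {2, 3, 4}"
    and i: "i = 3 * a + k" by blast
  define A B where "A = bloch q a" and "B = bloch q (k + 3)"
  have r0: "0 < r" using r by (simp add: r_def)
  have "A\<^sup>2 \<le> r" "B\<^sup>2 \<le> r"
    using bloch_local_sq_le_alpha_norm2[OF a] bloch_local_sq_le_alpha_norm2[OF k]
    by (simp_all add: r_def A_def B_def)
  then have "(A / sqrt r)\<^sup>2 \<le> 1" "(B / sqrt r)\<^sup>2 \<le> 1" using r0 by (simp_all add: power_divide)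
  then show ?thesis unfolding r_def[symmetric]
  proof (rule chi2_post_term_le_of_sq_bound[OF q, rotated])
    fix p assume p: "pure_state p" "agree_before i p q"
    have "bloch p j = bloch q j" if "0 < j" "j < 8" for j
      using p(2) that i a k by (auto intro!: agree_beforeD)
    then have "(r * bloch p i - A * B)\<^sup>2 \<le> (1 - r) * (r - A\<^sup>2) * (r - B\<^sup>2)"
      using pure_state_corr_entry_bound[OF p(1) _ a k] a k r i by (auto simp: r_def A_def B_def)
    then show "(bloch p i - A / sqrt r * (B / sqrt r))\<^sup>2
        \<le> (1 - r) * ((1 - (A / sqrt r)\<^sup>2) * (1 - (B / sqrt r)\<^sup>2))"
      by (rule row_bound_normalized[OF _ r0])
  qed (use r0 pure_state_alpha_norm2_le_1[OF q] in \<open>simp_all add: r_def\<close>)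
qed

lemma corr_row3_terms_eq_0:
  assumes q: "pure_state q" and i: "i \<in> {14, 15, 16}"
  shows "chi2_post_term q i = 0"
proof (rule chi2_post_term_eq_0_if_determined[OF q])
  fix p assume p: "pure_state p" "agree_before i p q"
  have "bloch p j = bloch q j" if "0 < j" "j < 14" for j
    using p(2) that i by (auto intro!: agree_beforeD)
  then show "bloch p i = bloch q i"
    using i pure_state_corr_row3[OF p(1)] pure_state_corr_row3[OF q] by auto
qed

lemma corr_row2_terms_eq_0:
  assumes q: "pure_state q" and nz: "(bloch q 3)\<^sup>2 + (bloch q 4)\<^sup>2 \<noteq> 0" and i: "i \<in> {11, 12, 13}"
  shows "chi2_post_term q i = 0"
proof (rule chi2_post_term_eq_0_if_determined[OF q])
  fix p assume p: "pure_state p" "agree_before i p q"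
  have e: "bloch p j = bloch q j" if "0 < j" "j < 11" for j
    using p(2) that i by (auto intro!: agree_beforeD)
  have "(bloch p 3)\<^sup>2 + (bloch p 4)\<^sup>2 \<noteq> 0" using nz by (simp add: e)
  then show "bloch p i = bloch q i"
    using i pure_state_corr_row2[OF p(1)] pure_state_corr_row2[OF q nz] by (auto simp: e)
qed

lemma corr_row1_terms_eq_0:
  assumes q: "pure_state q" and r: "0 < alpha_norm2 q" and z: "bloch q 3 = 0" "bloch q 4 = 0"
    and i: "i \<in> {8, 9, 10}"
  shows "chi2_post_term q i = 0"
proof (rule chi2_post_term_eq_0_if_determined[OF q])
  fix p assume p: "pure_state p" "agree_before i p q"
  have e: "bloch p j = bloch q j" if "0 < j" "j < 8" for j
    using p(2) that i by (auto intro!: agree_beforeD)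
  have row: "alpha_norm2 x * bloch x i = bloch x 2 * bloch x (i - 3)"
    if "pure_state x" "bloch x 3 = 0" "bloch x 4 = 0" for x
    using pure_state_corr_entry_degenerate[OF that(1), of 2 "i - 6"] that(2,3) i by auto
  have "alpha_norm2 q * bloch p i = alpha_norm2 q * bloch q i"
    using row[OF p(1)] row[OF q z] i z by (auto simp: e simp del: mult_cancel_left)
  then show "bloch p i = bloch q i" using r by simp
qed

lemma corr_row_of_agreeing:
  assumes a: "a \<in> {2, 3, 4}" and p: "pure_state p" "agree_before i p q" "8 \<le> i"
  shows "bloch p (3 * a + 2) * bloch q 5 + bloch p (3 * a + 3) * bloch q 6
    + bloch p (3 * a + 4) * bloch q 7 = bloch q a"
proof -
  have "bloch p j = bloch q j" if "j \<in> {a, 5, 6, 7}" for j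
    using p(2,3) that a by (auto intro!: agree_beforeD)
  then show ?thesis using pure_state_corr_row(1)[OF p(1) a] by simp
qed

text \<open>In a row of \<open>C\<close>, \<open>C \<beta> = \<alpha>\<close> determines the entry of the last nonzero coefficient of
  \<open>\<beta>\<close> from the earlier entries.\<close>

lemma corr_row_some_term_eq_0:
  assumes q: "pure_state q" and a: "a \<in> {2, 3, 4}" and r: "0 < alpha_norm2 q"
  shows "chi2_post_term q (3 * a + 2) = 0 \<or> chi2_post_term q (3 * a + 3) = 0
    \<or> chi2_post_term q (3 * a + 4) = 0"
proof -
  note row = corr_row_of_agreeing[OF a]
  have row_q: "bloch q (3 * a + 2) * bloch q 5 + bloch q (3 * a + 3) * bloch q 6
      + bloch q (3 * a + 4) * bloch q 7 = bloch q a"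
    using row[OF q, of 8] by (simp add: agree_before_def)
  have "bloch q 5 \<noteq> 0 \<or> bloch q 6 \<noteq> 0 \<or> bloch q 7 \<noteq> 0"
    using r bloch_beta_norm2[of q] by auto
  then consider (b7) "bloch q 7 \<noteq> 0" | (b6) "bloch q 7 = 0" "bloch q 6 \<noteq> 0"
    | (b5) "bloch q 7 = 0" "bloch q 6 = 0" "bloch q 5 \<noteq> 0"
    by blast
  then show ?thesis
  proof cases
    case b7
    have "chi2_post_term q (3 * a + 4) = 0"
    proof (rule chi2_post_term_eq_0_if_determined[OF q])
      fix p assume p: "pure_state p" "agree_before (3 * a + 4) p q"
      have "bloch p (3 * a + 2) = bloch q (3 * a + 2)" "bloch p (3 * a + 3) = bloch q (3 * a + 3)"
        using p(2) by (auto intro!: agree_beforeD)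
      moreover have "8 \<le> 3 * a + 4" using a by auto
      ultimately have "bloch q (3 * a + 2) * bloch q 5 + bloch q (3 * a + 3) * bloch q 6
          + bloch p (3 * a + 4) * bloch q 7 = bloch q a"
        using row[OF p] by simp
      with row_q have "bloch p (3 * a + 4) * bloch q 7 = bloch q (3 * a + 4) * bloch q 7" by linarith
      with b7 show "bloch p (3 * a + 4) = bloch q (3 * a + 4)" by simp
    qed
    then show ?thesis by simp
  next
    case b6
    have "chi2_post_term q (3 * a + 3) = 0"
    proof (rule chi2_post_term_eq_0_if_determined[OF q])
      fix p assume p: "pure_state p" "agree_before (3 * a + 3) p q"
      have "bloch p (3 * a + 2) = bloch q (3 * a + 2)" using p(2) by (auto intro!: agree_beforeD)
      moreover have "8 \<le> 3 * a + 3" using a by auto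
      ultimately have "bloch q (3 * a + 2) * bloch q 5 + bloch p (3 * a + 3) * bloch q 6 = bloch q a"
        using row[OF p] b6 by simp
      moreover have "bloch q (3 * a + 2) * bloch q 5 + bloch q (3 * a + 3) * bloch q 6 = bloch q a"
        using row_q b6 by simp
      ultimately have "bloch p (3 * a + 3) * bloch q 6 = bloch q (3 * a + 3) * bloch q 6" by linarith
      with b6 show "bloch p (3 * a + 3) = bloch q (3 * a + 3)" by simp
    qed
    then show ?thesis by simp
  next
    case b5
    have "chi2_post_term q (3 * a + 2) = 0"
    proof (rule chi2_post_term_eq_0_if_determined[OF q])
      fix p assume p: "pure_state p" "agree_before (3 * a + 2) p q"
      have "8 \<le> 3 * a + 2" using a by auto
      then have "bloch p (3 * a + 2) * bloch q 5 = bloch q a" using row[OF p] b5 by simp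
      moreover have "bloch q (3 * a + 2) * bloch q 5 = bloch q a" using row_q b5 by simp
      ultimately have "bloch p (3 * a + 2) * bloch q 5 = bloch q (3 * a + 2) * bloch q 5" by simp
      with b5 show "bloch p (3 * a + 2) = bloch q (3 * a + 2)" by simp
    qed
    then show ?thesis by simp
  qed
qed

lemma corr_terms_le_if_entangled:
  assumes q: "pure_state q" and r: "0 < alpha_norm2 q"
  shows "chi2_post_term q 8 + chi2_post_term q 9 + chi2_post_term q 10 + chi2_post_term q 11
    + chi2_post_term q 12 + chi2_post_term q 13 + chi2_post_term q 14 + chi2_post_term q 15
    + chi2_post_term q 16 \<le> 2 * (1 - alpha_norm2 q)"
proof -
  have "chi2_post_term q 8 \<le> 1 - alpha_norm2 q" "chi2_post_term q 9 \<le> 1 - alpha_norm2 q"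
    "chi2_post_term q 10 \<le> 1 - alpha_norm2 q" "chi2_post_term q 11 \<le> 1 - alpha_norm2 q"
    "chi2_post_term q 12 \<le> 1 - alpha_norm2 q" "chi2_post_term q 13 \<le> 1 - alpha_norm2 q"
    by (rule corr_term_le[OF q r]; simp)+
  moreover have "chi2_post_term q 14 = 0" "chi2_post_term q 15 = 0" "chi2_post_term q 16 = 0"
    by (rule corr_row3_terms_eq_0[OF q]; simp)+
  moreover have "chi2_post_term q 8 = 0 \<and> chi2_post_term q 9 = 0 \<and> chi2_post_term q 10 = 0
      \<and> (chi2_post_term q 11 = 0 \<or> chi2_post_term q 12 = 0 \<or> chi2_post_term q 13 = 0)
    \<or> chi2_post_term q 11 = 0 \<and> chi2_post_term q 12 = 0 \<and> chi2_post_term q 13 = 0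
      \<and> (chi2_post_term q 8 = 0 \<or> chi2_post_term q 9 = 0 \<or> chi2_post_term q 10 = 0)"
  proof (cases "bloch q 3 = 0 \<and> bloch q 4 = 0")
    case True
    then have "chi2_post_term q 8 = 0" "chi2_post_term q 9 = 0" "chi2_post_term q 10 = 0"
      by (simp_all add: corr_row1_terms_eq_0[OF q r])
    then show ?thesis using corr_row_some_term_eq_0[OF q _ r, of 3] by simp
  next
    case False
    then have "chi2_post_term q 11 = 0" "chi2_post_term q 12 = 0" "chi2_post_term q 13 = 0"
      by (simp_all add: corr_row2_terms_eq_0[OF q])
    then show ?thesis using corr_row_some_term_eq_0[OF q _ r, of 2] by simp
  qed
  ultimately show ?thesis by argo
qed

lemma max_entangled_local_eq_0:
  assumes "alpha_norm2 p = 0"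
  shows "bloch p 2 = 0" "bloch p 3 = 0" "bloch p 4 = 0" "bloch p 5 = 0" "bloch p 6 = 0" "bloch p 7 = 0"
  using assms bloch_beta_norm2[of p] by (simp_all add: add_nonneg_eq_0_iff)

lemma max_entangled_corr_rows:
  assumes "pure_state p" "alpha_norm2 p = 0"
  shows "(bloch p 8)\<^sup>2 + (bloch p 9)\<^sup>2 + (bloch p 10)\<^sup>2 = 1"
    and "(bloch p 11)\<^sup>2 + (bloch p 12)\<^sup>2 + (bloch p 13)\<^sup>2 = 1"
    and "bloch p 8 * bloch p 11 + bloch p 9 * bloch p 12 + bloch p 10 * bloch p 13 = 0"
  using pure_state_corr_row(2)[OF assms(1), of 2] pure_state_corr_row(2)[OF assms(1), of 3]
    bloch_corr_rows_orthogonal[of p] max_entangled_local_eq_0[OF assms(2)] assms(2)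
  by simp_all

lemma max_entangled_row1_terms_le:
  assumes q: "pure_state q" and r: "alpha_norm2 q = 0"
  shows "chi2_post_term q 8 + chi2_post_term q 9 + chi2_post_term q 10 \<le> 1"
proof -
  note z = max_entangled_local_eq_0[OF r]
  have "chi2_post_term q 8 = (bloch q 8)\<^sup>2"
    by (rule chi2_post_term_eq_sq_if_flips[OF q flips_apply_op_obs4]) (auto simp: z)
  moreover have "chi2_post_term q 9 = (bloch q 9)\<^sup>2"
    by (rule chi2_post_term_eq_sq_if_flips[OF q flips_apply_op_obs5]) (auto simp: z)
  moreover have "chi2_post_term q 10 \<le> (bloch q 10)\<^sup>2"
  proof (rule chi2_post_term_le_sq_if_determined_up_to_sign[OF q])
    fix p assume p: "pure_state p" "agree_before 10 p q"
    have e: "bloch p j = bloch q j" if "0 < j" "j < 10" for j using p(2) that by (rule agree_beforeD)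
    have "alpha_norm2 p = 0" using r by (simp add: e)
    then show "(bloch p 10)\<^sup>2 = (bloch q 10)\<^sup>2"
      using max_entangled_corr_rows(1)[OF p(1)] max_entangled_corr_rows(1)[OF q r] by (simp add: e)
  qed
  ultimately show ?thesis using max_entangled_corr_rows(1)[OF q r] by linarith
qed

lemma max_entangled_term_12_le:
  assumes q: "pure_state q" and r: "alpha_norm2 q = 0"
  shows "chi2_post_term q 12 \<le> 1 - (bloch q 11)\<^sup>2"
proof -
  note rows = max_entangled_corr_rows[OF q r]
  have q11: "(bloch q 11)\<^sup>2 \<le> 1"
    using rows(2) zero_le_power2[of "bloch q 12"] zero_le_power2[of "bloch q 13"] by argo
  show ?thesis
  proof (rule chi2_post_term_le_of_sq_bound[OF q, where u = 0 and v = 0])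
    fix p assume p: "pure_state p" "agree_before 12 p q"
    have e: "bloch p j = bloch q j" if "0 < j" "j < 12" for j using p(2) that by (rule agree_beforeD)
    have "alpha_norm2 p = 0" using r by (simp add: e)
    then have "(bloch q 11)\<^sup>2 + (bloch p 12)\<^sup>2 + (bloch p 13)\<^sup>2 = 1"
      using max_entangled_corr_rows(2)[OF p(1)] by (simp add: e)
    then have "(bloch p 12)\<^sup>2 \<le> 1 - (bloch q 11)\<^sup>2" using zero_le_power2[of "bloch p 13"] by argo
    then show "(bloch p 12 - 0 * 0)\<^sup>2 \<le> (1 - (bloch q 11)\<^sup>2) * ((1 - 0\<^sup>2) * (1 - 0\<^sup>2))"
      by simp
  qed (use q11 in simp_all)
qed

lemma max_entangled_term_13_eq_0:
  assumes q: "pure_state q" and r: "alpha_norm2 q = 0" and nz: "bloch q 10 \<noteq> 0"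
  shows "chi2_post_term q 13 = 0"
proof (rule chi2_post_term_eq_0_if_determined[OF q])
  fix p assume p: "pure_state p" "agree_before 13 p q"
  have e: "bloch p j = bloch q j" if "0 < j" "j < 13" for j using p(2) that by (rule agree_beforeD)
  have "alpha_norm2 p = 0" using r by (simp add: e)
  then have "bloch q 8 * bloch q 11 + bloch q 9 * bloch q 12 + bloch q 10 * bloch p 13 = 0"
    using max_entangled_corr_rows(3)[OF p(1)] by (simp add: e)
  with max_entangled_corr_rows(3)[OF q r]
  have "bloch q 10 * bloch p 13 = bloch q 10 * bloch q 13" by linarith
  with nz show "bloch p 13 = bloch q 13" by simp
qed

lemma max_entangled_terms_12_13_le_sq:
  assumes q: "pure_state q" and r: "alpha_norm2 q = 0" and z10: "bloch q 10 = 0"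
  shows "chi2_post_term q 12 \<le> (bloch q 12)\<^sup>2" and "chi2_post_term q 13 \<le> (bloch q 13)\<^sup>2"
proof -
  note rows = max_entangled_corr_rows[OF q r]
  show "chi2_post_term q 12 \<le> (bloch q 12)\<^sup>2"
  proof (cases "bloch q 9 = 0")
    case True
    have "chi2_post_term q 12 = (bloch q 12)\<^sup>2"
      by (rule chi2_post_term_eq_sq_if_flips[OF q flips_apply_op_obs5])
        (use True z10 in \<open>auto simp: max_entangled_local_eq_0[OF r]\<close>)
    then show ?thesis by simp
  next
    case False
    have "chi2_post_term q 12 = 0"
    proof (rule chi2_post_term_eq_0_if_determined[OF q])
      fix p assume p: "pure_state p" "agree_before 12 p q"
      have e: "bloch p j = bloch q j" if "0 < j" "j < 12" for j using p(2) that by (rule agree_beforeD)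
      have "alpha_norm2 p = 0" using r by (simp add: e)
      then have "bloch q 8 * bloch q 11 + bloch q 9 * bloch p 12 = 0"
        using max_entangled_corr_rows(3)[OF p(1)] z10 by (simp add: e)
      moreover have "bloch q 8 * bloch q 11 + bloch q 9 * bloch q 12 = 0" using rows(3) z10 by simp
      ultimately have "bloch q 9 * bloch p 12 = bloch q 9 * bloch q 12" by linarith
      with False show "bloch p 12 = bloch q 12" by simp
    qed
    then show ?thesis by simp
  qed
  show "chi2_post_term q 13 \<le> (bloch q 13)\<^sup>2"
  proof (rule chi2_post_term_le_sq_if_determined_up_to_sign[OF q])
    fix p assume p: "pure_state p" "agree_before 13 p q"
    have e: "bloch p j = bloch q j" if "0 < j" "j < 13" for j using p(2) that by (rule agree_beforeD)
    have "alpha_norm2 p = 0" using r by (simp add: e)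
    then show "(bloch p 13)\<^sup>2 = (bloch q 13)\<^sup>2"
      using max_entangled_corr_rows(2)[OF p(1)] rows(2) by (simp add: e)
  qed
qed

lemma max_entangled_row2_terms_le:
  assumes q: "pure_state q" and r: "alpha_norm2 q = 0"
  shows "chi2_post_term q 11 + chi2_post_term q 12 + chi2_post_term q 13 \<le> 1"
proof -
  have "chi2_post_term q 11 = (bloch q 11)\<^sup>2"
    by (rule chi2_post_term_eq_sq_if_flips[OF q flips_apply_op_obs2])
      (auto simp: max_entangled_local_eq_0[OF r])
  moreover have "chi2_post_term q 12 + chi2_post_term q 13 \<le> 1 - (bloch q 11)\<^sup>2"
  proof (cases "bloch q 10 = 0")
    case True
    then show ?thesis using max_entangled_terms_12_13_le_sq[OF q r True] max_entangled_corr_rows(2)[OF q r]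
      by argo
  next
    case False
    then show ?thesis using max_entangled_term_12_le[OF q r] max_entangled_term_13_eq_0[OF q r] by simp
  qed
  ultimately show ?thesis by simp
qed

lemma corr_terms_le:
  assumes q: "pure_state q"
  shows "chi2_post_term q 8 + chi2_post_term q 9 + chi2_post_term q 10 + chi2_post_term q 11
    + chi2_post_term q 12 + chi2_post_term q 13 + chi2_post_term q 14 + chi2_post_term q 15
    + chi2_post_term q 16 \<le> 2 * (1 - alpha_norm2 q)"
proof (cases "alpha_norm2 q = 0")
  case True
  then show ?thesis
    using max_entangled_row1_terms_le[OF q] max_entangled_row2_terms_le[OF q]
      corr_row3_terms_eq_0[OF q] by simp
next
  case False
  then have "0 < alpha_norm2 q" by (simp add: add_pos_nonneg order_less_le)
  then show ?thesis by (rule corr_terms_le_if_entangled[OF q])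
qed

lemma I_chi2_post_expand:
  "I_chi2_post q = chi2_post_term q 2 + chi2_post_term q 3 + chi2_post_term q 4 + chi2_post_term q 5
    + chi2_post_term q 6 + chi2_post_term q 7 + chi2_post_term q 8 + chi2_post_term q 9
    + chi2_post_term q 10 + chi2_post_term q 11 + chi2_post_term q 12 + chi2_post_term q 13
    + chi2_post_term q 14 + chi2_post_term q 15 + chi2_post_term q 16"
proof -
  have "{2..16::nat} = {2, 3, 4, 5, 6, 7, 8, 9, 10, 11, 12, 13, 14, 15, 16}"
    by (auto simp: numeral_eq_Suc le_Suc_eq)
  then show ?thesis by (simp add: I_chi2_post_def add.assoc)
qed

lemma I_chi2_post_le_2: "pure_state q \<Longrightarrow> I_chi2_post q \<le> 2"
  unfolding I_chi2_post_expand using local_terms_le corr_terms_le by fastforce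

lemma product_state_corr_terms_eq_0:
  assumes q: "pure_state q" and r: "alpha_norm2 q = 1" and i: "i \<in> {8..16}"
  shows "chi2_post_term q i = 0"
proof (rule chi2_post_term_eq_0_if_determined[OF q])
  fix p assume p: "pure_state p" "agree_before i p q"
  from corr_index_exhaust[OF i] obtain a k where a: "a \<in> {2, 3, 4}" and k: "k \<in> {2, 3, 4}"
    and i: "i = 3 * a + k" by blast
  have e: "bloch p j = bloch q j" if "0 < j" "j < 8" for j
    using p(2) that i a k by (auto intro!: agree_beforeD)
  have "alpha_norm2 p = 1" using r e by simp
  then have "bloch p i = bloch p a * bloch p (k + 3)"
    using pure_state_corr_entry_degenerate[OF p(1) a k] i by simp
  also have "\<dots> = bloch q a * bloch q (k + 3)" using a k by (auto simp: e)
  also have "\<dots> = bloch q i" using pure_state_corr_entry_degenerate[OF q a k] r i by simp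
  finally show "bloch p i = bloch q i" .
qed

definition ket00 :: "nat \<Rightarrow> complex" where
  "ket00 r = (if r = 0 then 1 else 0)"

lemma pure_state_ket00: "pure_state ket00"
  unfolding pure_state_def sum_lessThan_4 by (simp add: ket00_def)

lemma bloch_ket00:
  "bloch ket00 2 = 0" "bloch ket00 3 = 0" "bloch ket00 4 = 1"
  "bloch ket00 5 = 0" "bloch ket00 6 = 0" "bloch ket00 7 = 1"
  unfolding bloch_expand by (simp_all add: ket00_def)

lemma I_chi2_post_ket00: "I_chi2_post ket00 = 2"
proof -
  note q = pure_state_ket00 and b = bloch_ket00
  have "chi2_post_term ket00 7 = (bloch ket00 7)\<^sup>2"
    by (rule chi2_post_term_eq_sq_if_flips[OF q flips_apply_op_obs5]) (auto simp: b)
  moreover have "chi2_post_term ket00 i = 0" if "i \<in> {8..16}" for i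
    using product_state_corr_terms_eq_0[OF q _ that] b by simp
  ultimately show ?thesis unfolding I_chi2_post_expand using local_terms_eq_sq[OF q] b by simp
qed

theorem theorem1:
  shows "(\<forall>psi. pure_state psi \<longrightarrow> I_chi2_post psi \<le> 2) \<and>
         (\<exists>psi. pure_state psi \<and> I_chi2_post psi = 2)"
  using I_chi2_post_le_2 I_chi2_post_ket00 pure_state_ket00 by blast

end
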